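(* Let $\mathcal A$ be a bialgebra with unit, comultiplication $\Delta$ and counit $\varepsilon$, and let $\mathcal A_1,\mathcal A_2\subset\mathcal A$ be subalgebras such that the multiplication map $\mu:\mathcal A_1\otimes\mathcal A_2\to\mathcal A$ is a linear isomorphism, $\Delta(\mathcal A_1)\subset\mathcal A\otimes\mathcal A_1$ and $\Delta(\mathcal A_2)\subset\mathcal A_2\otimes\mathcal A$. Define $\Pi_1,\Pi_2:\mathcal A\to\mathcal A$ by $\Pi_1(a_1a_2)=a_1\varepsilon(a_2)$, $\Pi_2(a_1a_2)=\varepsilon(a_1)a_2$ for $a_1\in\mathcal A_1$, $a_2\in\mathcal A_2$. Then for every $a\in\mathcal A$, $$\mu(\Pi_1\otimes\Pi_2)\Delta(a)=a.$$
   Context: Sweedler notation: $\Delta(a)=a'\otimes a''$; the claim reads $\Pi_1(a')\Pi_2(a'')=a$. *)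

theory Defs
  imports Main "HOL.Vector_Spaces"
begin

definition algebra_over :: "('k::field \<Rightarrow> 'a::ring_1 \<Rightarrow> 'a) \<Rightarrow> bool" where
  "algebra_over scale \<longleftrightarrow> Vector_Spaces.vector_space scale \<and>
     (\<forall>c x y. scale c (x * y) = scale c x * y \<and> scale c (x * y) = x * scale c y)"

definition bilin_on :: "('k::field \<Rightarrow> 'a::ab_group_add \<Rightarrow> 'a) \<Rightarrow> 'a set \<Rightarrow> 'a set \<Rightarrow> ('a \<Rightarrow> 'a \<Rightarrow> 'k) \<Rightarrow> bool" where
  "bilin_on scale S T B \<longleftrightarrow>
     (\<forall>x\<in>S. \<forall>x'\<in>S. \<forall>y\<in>T. B (x + x') y = B x y + B x' y) \<and>
     (\<forall>x\<in>S. \<forall>y\<in>T. \<forall>y'\<in>T. B x (y + y') = B x y + B x y') \<and>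
     (\<forall>c. \<forall>x\<in>S. \<forall>y\<in>T. B (scale c x) y = c * B x y \<and> B x (scale c y) = c * B x y)"

text \<open>A list of pairs in S \<times> T represents the tensor \<Sum> x_i \<otimes> y_i in S \<otimes> T.
 Over a field, two such tensors are equal iff every bilinear form on S \<times> T
 takes the same value on them.\<close>
definition tensor_eq_on :: "('k::field \<Rightarrow> 'a::ab_group_add \<Rightarrow> 'a) \<Rightarrow> 'a set \<Rightarrow> 'a set \<Rightarrow> ('a \<times> 'a) list \<Rightarrow> ('a \<times> 'a) list \<Rightarrow> bool" where
  "tensor_eq_on scale S T xs ys \<longleftrightarrow>
     (\<forall>B. bilin_on scale S T B \<longrightarrow> (\<Sum>(x, y)\<leftarrow>xs. B x y) = (\<Sum>(x, y)\<leftarrow>ys. B x y))"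

abbreviation tensor_eq :: "('k::field \<Rightarrow> 'a::ab_group_add \<Rightarrow> 'a) \<Rightarrow> ('a \<times> 'a) list \<Rightarrow> ('a \<times> 'a) list \<Rightarrow> bool" where
  "tensor_eq scale \<equiv> tensor_eq_on scale UNIV UNIV"

definition trilin :: "('k::field \<Rightarrow> 'a::ab_group_add \<Rightarrow> 'a) \<Rightarrow> ('a \<Rightarrow> 'a \<Rightarrow> 'a \<Rightarrow> 'k) \<Rightarrow> bool" where
  "trilin scale B \<longleftrightarrow>
     (\<forall>x x' y z. B (x + x') y z = B x y z + B x' y z) \<and>
     (\<forall>x y y' z. B x (y + y') z = B x y z + B x y' z) \<and>
     (\<forall>x y z z'. B x y (z + z') = B x y z + B x y z') \<and>
     (\<forall>c x y z. B (scale c x) y z = c * B x y z \<and> B x (scale c y) z = c * B x y z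
                \<and> B x y (scale c z) = c * B x y z)"

definition tensor3_eq :: "('k::field \<Rightarrow> 'a::ab_group_add \<Rightarrow> 'a) \<Rightarrow> ('a \<times> 'a \<times> 'a) list \<Rightarrow> ('a \<times> 'a \<times> 'a) list \<Rightarrow> bool" where
  "tensor3_eq scale xs ys \<longleftrightarrow>
     (\<forall>B. trilin scale B \<longrightarrow> (\<Sum>(x, y, z)\<leftarrow>xs. B x y z) = (\<Sum>(x, y, z)\<leftarrow>ys. B x y z))"

text \<open>Bialgebra: the comultiplication is given in Sweedler form, Delta a being a
 list of pairs (a', a'') representing \<Sum> a' \<otimes> a''.\<close>
definition bialgebra :: "('k::field \<Rightarrow> 'a::ring_1 \<Rightarrow> 'a) \<Rightarrow> ('a \<Rightarrow> ('a \<times> 'a) list) \<Rightarrow> ('a \<Rightarrow> 'k) \<Rightarrow> bool" where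
  "bialgebra scale Delta eps \<longleftrightarrow>
     algebra_over scale \<and>
     \<comment> \<open>Delta linear\<close>
     (\<forall>x y. tensor_eq scale (Delta (x + y)) (Delta x @ Delta y)) \<and>
     (\<forall>c x. tensor_eq scale (Delta (scale c x)) (map (\<lambda>(u, v). (scale c u, v)) (Delta x))) \<and>
     \<comment> \<open>coassociativity\<close>
     (\<forall>a. tensor3_eq scale
            (concat (map (\<lambda>(x, y). map (\<lambda>(u, v). (u, v, y)) (Delta x)) (Delta a)))
            (concat (map (\<lambda>(x, y). map (\<lambda>(u, v). (x, u, v)) (Delta y)) (Delta a)))) \<and>
     \<comment> \<open>eps linear, counit axioms\<close>
     Vector_Spaces.linear scale (*) eps \<and>
     (\<forall>a. (\<Sum>(x, y)\<leftarrow>Delta a. scale (eps x) y) = a) \<and>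
     (\<forall>a. (\<Sum>(x, y)\<leftarrow>Delta a. scale (eps y) x) = a) \<and>
     \<comment> \<open>Delta and eps are unital algebra homomorphisms\<close>
     (\<forall>a b. tensor_eq scale (Delta (a * b))
              (concat (map (\<lambda>(x, y). map (\<lambda>(x', y'). (x * x', y * y')) (Delta b)) (Delta a)))) \<and>
     tensor_eq scale (Delta 1) [(1, 1)] \<and>
     (\<forall>a b. eps (a * b) = eps a * eps b) \<and> eps 1 = 1"

definition subalgebra :: "('k::field \<Rightarrow> 'a::ring_1 \<Rightarrow> 'a) \<Rightarrow> 'a set \<Rightarrow> bool" where
  "subalgebra scale S \<longleftrightarrow> module.subspace scale S \<and> 1 \<in> S \<and> (\<forall>x\<in>S. \<forall>y\<in>S. x * y \<in> S)"

end

theory Submission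
  imports Defs
begin

text \<open>For a bilinear map F the Sweedler sum \<open>\<Sum> F(a', a'')\<close> is linear in a, and since the
 products \<open>a\<^sub>1 a\<^sub>2\<close> span \<open>\<A>\<close> it suffices to treat \<open>a = a\<^sub>1 a\<^sub>2\<close>. Multiplicativity of
 \<open>\<Delta>\<close> gives \<open>\<Delta>(a\<^sub>1 a\<^sub>2) = \<Sum> a\<^sub>1' a\<^sub>2' \<otimes> a\<^sub>1'' a\<^sub>2''\<close>, where the coideal conditions let us
 choose \<open>a\<^sub>1'' \<in> \<A>\<^sub>1\<close> and \<open>a\<^sub>2' \<in> \<A>\<^sub>2\<close>. As \<open>\<Pi>\<^sub>1(x b) = \<Pi>\<^sub>1(x) \<epsilon>(b)\<close> for \<open>b \<in> \<A>\<^sub>2\<close> and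
 \<open>\<Pi>\<^sub>2(a x) = \<epsilon>(a) \<Pi>\<^sub>2(x)\<close> for \<open>a \<in> \<A>\<^sub>1\<close>, the sum factors as
 \<open>\<Pi>\<^sub>1(\<Sum> a\<^sub>1' \<epsilon>(a\<^sub>1'')) \<Pi>\<^sub>2(\<Sum> \<epsilon>(a\<^sub>2') a\<^sub>2'') = \<Pi>\<^sub>1(a\<^sub>1) \<Pi>\<^sub>2(a\<^sub>2) = a\<^sub>1 a\<^sub>2\<close> by the counit axioms.\<close>

lemma sum_list_map_concat:
  "(\<Sum>x\<leftarrow>concat xss. f x) = (\<Sum>xs\<leftarrow>xss. \<Sum>x\<leftarrow>xs. f x)"
  by (induction xss) auto

lemma linear_sum_list:
  assumes "Vector_Spaces.linear s1 s2 f"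
  shows "f (\<Sum>x\<leftarrow>xs. g x) = (\<Sum>x\<leftarrow>xs. f (g x))"
proof -
  interpret Vector_Spaces.linear s1 s2 f by fact
  show ?thesis by (induction xs) (simp_all add: add)
qed

lemma (in vector_space) exists_linear_functional_nonzero:
  assumes "v \<noteq> 0"
  obtains \<phi> where "Vector_Spaces.linear scale (*) \<phi>" and "\<phi> v \<noteq> 0"
proof -
  obtain B where B: "independent B" "span B = UNIV"
    using maximal_independent_subset[of UNIV] by (metis span_UNIV subset_antisym top_greatest)
  have "\<exists>b. representation B v b \<noteq> 0"
  proof (rule ccontr)
    assume "\<not> ?thesis"
    then have "v = 0"
      using sum_nonzero_representation_eq[OF B(1), of v] B(2) by simp
    with assms show False ..
  qed
  then obtain b where "representation B v b \<noteq> 0" by blast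
  with linear_representation[OF B] show thesis by (rule that)
qed

definition bilinear_map :: "('k::field \<Rightarrow> 'a::ab_group_add \<Rightarrow> 'a) \<Rightarrow> ('a \<Rightarrow> 'a \<Rightarrow> 'a) \<Rightarrow> bool" where
  "bilinear_map scale F \<longleftrightarrow>
     (\<forall>y. Vector_Spaces.linear scale scale (\<lambda>x. F x y)) \<and> (\<forall>x. Vector_Spaces.linear scale scale (F x))"

text \<open>Tensor equality is only tested against scalar bilinear forms; composing F with a linear
 functional that separates the two sides reduces the vector-valued case to that one.\<close>

lemma tensor_eq_sum_list_bilinear:
  assumes F: "bilinear_map scale F" and eq: "tensor_eq scale xs ys"
  shows "(\<Sum>(x, y)\<leftarrow>xs. F x y) = (\<Sum>(x, y)\<leftarrow>ys. F x y)"
proof (rule ccontr)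
  let ?d = "(\<Sum>(x, y)\<leftarrow>xs. F x y) - (\<Sum>(x, y)\<leftarrow>ys. F x y)"
  assume "\<not> ?thesis"
  moreover have "vector_space scale"
    using F by (auto simp: bilinear_map_def linear_iff)
  ultimately obtain \<phi> where \<phi>: "Vector_Spaces.linear scale (*) \<phi>" and "\<phi> ?d \<noteq> 0"
    using vector_space.exists_linear_functional_nonzero by (metis eq_iff_diff_eq_0)
  moreover have "bilin_on scale UNIV UNIV (\<lambda>x y. \<phi> (F x y))"
    using F \<phi> by (auto simp: bilinear_map_def bilin_on_def linear_iff)
  with eq have "(\<Sum>(x, y)\<leftarrow>xs. \<phi> (F x y)) = (\<Sum>(x, y)\<leftarrow>ys. \<phi> (F x y))"
    by (auto simp: tensor_eq_on_def)
  then have "\<phi> ?d = 0"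
    using \<phi>
    by (simp add: linear_sum_list linear_iff_module_hom module_hom.diff prod.case_distrib)
  ultimately show False by simp
qed

lemma algebra_over_scale_mult_commute:
  assumes "algebra_over scale"
  shows "scale c x * scale d y = scale d x * scale c y"
proof -
  have "module scale"
    and "\<And>c x y. scale c x * y = scale c (x * y)" and "\<And>c x y. x * scale c y = scale c (x * y)"
    using assms unfolding algebra_over_def module_iff_vector_space by metis+
  then show ?thesis
    by (simp add: module.scale_scale mult.commute)
qed

lemma linear_mult_left:
  assumes "algebra_over scale"
  shows "Vector_Spaces.linear scale scale (\<lambda>x. c * x)"
  using assms by (auto simp: algebra_over_def linear_iff distrib_left) metis

lemma linear_mult_right:
  assumes "algebra_over scale"
  shows "Vector_Spaces.linear scale scale (\<lambda>x. x * c)"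
  using assms by (auto simp: algebra_over_def linear_iff distrib_right)

lemma bilinear_map_swap: "bilinear_map scale F \<Longrightarrow> bilinear_map scale (\<lambda>x y. F y x)"
  by (simp add: bilinear_map_def)

lemma bilinear_map_mult:
  assumes "algebra_over scale"
    and "Vector_Spaces.linear scale scale f" and "Vector_Spaces.linear scale scale g"
  shows "bilinear_map scale (\<lambda>x y. f x * g y)"
  using Vector_Spaces.linear_compose[OF assms(2) linear_mult_right[OF assms(1)]]
    Vector_Spaces.linear_compose[OF assms(3) linear_mult_left[OF assms(1)]]
  by (simp add: bilinear_map_def comp_def)

lemma bilinear_map_scale_functional:
  assumes f: "Vector_Spaces.linear scale scale f" and \<phi>: "Vector_Spaces.linear scale (*) \<phi>"
  shows "bilinear_map scale (\<lambda>x y. scale (\<phi> y) (f x))"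
proof -
  interpret vector_space_pair scale scale
    using f by (simp add: linear_iff vector_space_pair_def)
  show ?thesis
    using linear_compose_scale_right[OF f] linear_compose_scale[OF \<phi>]
    by (simp add: bilinear_map_def)
qed

lemma bilinear_map_sum_list:
  assumes "vector_space scale" and "\<And>p. p \<in> set ps \<Longrightarrow> bilinear_map scale (F p)"
  shows "bilinear_map scale (\<lambda>x y. \<Sum>p\<leftarrow>ps. F p x y)"
proof -
  interpret vector_space_pair scale scale
    using assms(1) by (simp add: vector_space_pair_def)
  show ?thesis
    using assms(2)
    by (induction ps) (simp_all add: bilinear_map_def linear_zero linear_compose_add)
qed

lemma bialgebra_sum_Delta_add:
  assumes "bialgebra scale Delta eps" and "bilinear_map scale F"
  shows "(\<Sum>(u, v)\<leftarrow>Delta (x + y). F u v)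
    = (\<Sum>(u, v)\<leftarrow>Delta x. F u v) + (\<Sum>(u, v)\<leftarrow>Delta y. F u v)"
proof -
  have "tensor_eq scale (Delta (x + y)) (Delta x @ Delta y)"
    using assms(1) by (simp add: bialgebra_def)
  from tensor_eq_sum_list_bilinear[OF assms(2) this] show ?thesis by simp
qed

lemma bialgebra_sum_Delta_mult:
  assumes "bialgebra scale Delta eps" and "bilinear_map scale F"
  shows "(\<Sum>(u, v)\<leftarrow>Delta (a * b). F u v)
    = (\<Sum>(u, v)\<leftarrow>Delta a. \<Sum>(u', v')\<leftarrow>Delta b. F (u * u') (v * v'))"
proof -
  have "tensor_eq scale (Delta (a * b))
          (concat (map (\<lambda>(u, v). map (\<lambda>(u', v'). (u * u', v * v')) (Delta b)) (Delta a)))"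
    using assms(1) by (simp add: bialgebra_def)
  from tensor_eq_sum_list_bilinear[OF assms(2) this] show ?thesis
    by (simp add: sum_list_map_concat comp_def split_def)
qed

lemma bialgebra_sum_Delta_sum_list:
  assumes "bialgebra scale Delta eps" and "bilinear_map scale F"
  shows "(\<Sum>(u, v)\<leftarrow>Delta (\<Sum>x\<leftarrow>xs. g x). F u v)
    = (\<Sum>x\<leftarrow>xs. \<Sum>(u, v)\<leftarrow>Delta (g x). F u v)"
proof -
  note add = bialgebra_sum_Delta_add[OF assms]
  have "(\<Sum>(u, v)\<leftarrow>Delta 0. F u v) = 0"
    using add[of 0 0] by simp
  with add show ?thesis
    by (induction xs) simp_all
qed

locale factorized_bialgebra =
  fixes scale :: "'k::field \<Rightarrow> 'a::ring_1 \<Rightarrow> 'a"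
    and Delta :: "'a \<Rightarrow> ('a \<times> 'a) list" and eps :: "'a \<Rightarrow> 'k"
    and A1 A2 :: "'a set" and Pi1 Pi2 :: "'a \<Rightarrow> 'a"
  assumes bialgebra: "bialgebra scale Delta eps"
    and subalgebra_A1: "subalgebra scale A1" and subalgebra_A2: "subalgebra scale A2"
    and mult_spans: "\<exists>ps. set ps \<subseteq> A1 \<times> A2 \<and> a = (\<Sum>(x, y)\<leftarrow>ps. x * y)"
    and Delta_A1: "a \<in> A1 \<Longrightarrow> \<exists>ps. snd ` set ps \<subseteq> A1 \<and> tensor_eq scale (Delta a) ps"
    and Delta_A2: "a \<in> A2 \<Longrightarrow> \<exists>ps. fst ` set ps \<subseteq> A2 \<and> tensor_eq scale (Delta a) ps"
    and linear_Pi1: "Vector_Spaces.linear scale scale Pi1"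
    and linear_Pi2: "Vector_Spaces.linear scale scale Pi2"
    and Pi1_mult: "a1 \<in> A1 \<Longrightarrow> a2 \<in> A2 \<Longrightarrow> Pi1 (a1 * a2) = scale (eps a2) a1"
    and Pi2_mult: "a1 \<in> A1 \<Longrightarrow> a2 \<in> A2 \<Longrightarrow> Pi2 (a1 * a2) = scale (eps a1) a2"
begin

sublocale Pi1: Vector_Spaces.linear scale scale Pi1
  by (rule linear_Pi1)

sublocale Pi2: Vector_Spaces.linear scale scale Pi2
  by (rule linear_Pi2)

lemma algebra: "algebra_over scale"
  using bialgebra by (simp add: bialgebra_def)

lemma vector_space_scale: "vector_space scale"
  using algebra by (simp add: algebra_over_def)

lemma module_scale: "module scale"
  using vector_space_scale by (simp add: module_iff_vector_space)

lemma linear_eps: "Vector_Spaces.linear scale (*) eps"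
  using bialgebra by (simp add: bialgebra_def)

lemma eps_mult: "eps (a * b) = eps a * eps b"
  using bialgebra by (simp add: bialgebra_def)

lemma Pi1_A1: "a \<in> A1 \<Longrightarrow> Pi1 a = a"
  using Pi1_mult[of a 1] subalgebra_A2 bialgebra module.scale_one[OF module_scale]
  by (simp add: subalgebra_def bialgebra_def)

lemma Pi2_A2: "a \<in> A2 \<Longrightarrow> Pi2 a = a"
  using Pi2_mult[of 1 a] subalgebra_A1 bialgebra module.scale_one[OF module_scale]
  by (simp add: subalgebra_def bialgebra_def)

lemma Pi1_mult_right:
  assumes b: "b \<in> A2"
  shows "Pi1 (x * b) = scale (eps b) (Pi1 x)"
proof -
  obtain ps where ps: "set ps \<subseteq> A1 \<times> A2" and x: "x = (\<Sum>(u, v)\<leftarrow>ps. u * v)"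
    using mult_spans by blast
  have "Pi1 (x * b) = (\<Sum>(u, v)\<leftarrow>ps. Pi1 (u * (v * b)))"
    by (simp add: x linear_sum_list[OF linear_Pi1] split_def mult.assoc flip: sum_list_mult_const)
  also have "\<dots> = (\<Sum>(u, v)\<leftarrow>ps. scale (eps b) (Pi1 (u * v)))"
    using ps b subalgebra_A2 Pi1_mult
    by (intro arg_cong[where f = sum_list] map_cong)
      (auto simp: subalgebra_def eps_mult module.scale_scale[OF module_scale] mult.commute)
  also have "\<dots> = scale (eps b) (Pi1 x)"
    by (simp add: x linear_sum_list[OF linear_Pi1] prod.case_distrib
        linear_sum_list[OF vector_space.linear_scale_self[OF vector_space_scale]])
  finally show ?thesis .
qed

lemma Pi2_mult_left:
  assumes a: "a \<in> A1"
  shows "Pi2 (a * x) = scale (eps a) (Pi2 x)"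
proof -
  obtain ps where ps: "set ps \<subseteq> A1 \<times> A2" and x: "x = (\<Sum>(u, v)\<leftarrow>ps. u * v)"
    using mult_spans by blast
  have "Pi2 (a * x) = (\<Sum>(u, v)\<leftarrow>ps. Pi2 ((a * u) * v))"
    by (simp add: x linear_sum_list[OF linear_Pi2] split_def mult.assoc flip: sum_list_const_mult)
  also have "\<dots> = (\<Sum>(u, v)\<leftarrow>ps. scale (eps a) (Pi2 (u * v)))"
    using ps a subalgebra_A1 Pi2_mult
    by (intro arg_cong[where f = sum_list] map_cong)
      (auto simp: subalgebra_def eps_mult module.scale_scale[OF module_scale])
  also have "\<dots> = scale (eps a) (Pi2 x)"
    by (simp add: x linear_sum_list[OF linear_Pi2] prod.case_distrib
        linear_sum_list[OF vector_space.linear_scale_self[OF vector_space_scale]])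
  finally show ?thesis .
qed

lemma sum_counit_Pi1:
  assumes "tensor_eq scale (Delta a) ps"
  shows "(\<Sum>(u, v)\<leftarrow>ps. scale (eps v) (Pi1 u)) = Pi1 a"
proof -
  have "(\<Sum>(u, v)\<leftarrow>ps. scale (eps v) (Pi1 u)) = (\<Sum>(u, v)\<leftarrow>Delta a. scale (eps v) (Pi1 u))"
    using tensor_eq_sum_list_bilinear[OF bilinear_map_scale_functional[OF linear_Pi1 linear_eps] assms]
    by simp
  also have "\<dots> = Pi1 (\<Sum>(u, v)\<leftarrow>Delta a. scale (eps v) u)"
    by (simp add: Pi1.scale linear_sum_list[OF linear_Pi1] prod.case_distrib)
  also have "\<dots> = Pi1 a"
    using bialgebra by (simp add: bialgebra_def)
  finally show ?thesis .
qed

lemma sum_counit_Pi2: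
  assumes "tensor_eq scale (Delta a) ps"
  shows "(\<Sum>(u, v)\<leftarrow>ps. scale (eps u) (Pi2 v)) = Pi2 a"
proof -
  have "(\<Sum>(u, v)\<leftarrow>ps. scale (eps u) (Pi2 v)) = (\<Sum>(u, v)\<leftarrow>Delta a. scale (eps u) (Pi2 v))"
    using tensor_eq_sum_list_bilinear[OF
        bilinear_map_swap[OF bilinear_map_scale_functional[OF linear_Pi2 linear_eps]] assms]
    by simp
  also have "\<dots> = Pi2 (\<Sum>(u, v)\<leftarrow>Delta a. scale (eps u) v)"
    by (simp add: Pi2.scale linear_sum_list[OF linear_Pi2] prod.case_distrib)
  also have "\<dots> = Pi2 a"
    using bialgebra by (simp add: bialgebra_def)
  finally show ?thesis .
qed

lemma bilinear_map_Pi1_Pi2_comp: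
  assumes "Vector_Spaces.linear scale scale f" and "Vector_Spaces.linear scale scale g"
  shows "bilinear_map scale (\<lambda>u v. Pi1 (f u) * Pi2 (g v))"
  using bilinear_map_mult[OF algebra Vector_Spaces.linear_compose[OF assms(1) linear_Pi1]
      Vector_Spaces.linear_compose[OF assms(2) linear_Pi2]]
  by (simp add: comp_def)

lemma sum_Delta_Pi_mult:
  assumes a1: "a1 \<in> A1" and a2: "a2 \<in> A2"
  shows "(\<Sum>(u, v)\<leftarrow>Delta (a1 * a2). Pi1 u * Pi2 v) = a1 * a2"
proof -
  obtain ps1 where ps1: "snd ` set ps1 \<subseteq> A1" "tensor_eq scale (Delta a1) ps1"
    using Delta_A1[OF a1] by blast
  obtain ps2 where ps2: "fst ` set ps2 \<subseteq> A2" "tensor_eq scale (Delta a2) ps2"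
    using Delta_A2[OF a2] by blast
  have "(\<Sum>(u, v)\<leftarrow>Delta (a1 * a2). Pi1 u * Pi2 v)
      = (\<Sum>(u, v)\<leftarrow>Delta a1. \<Sum>(u', v')\<leftarrow>Delta a2. Pi1 (u * u') * Pi2 (v * v'))"
    by (rule bialgebra_sum_Delta_mult[OF bialgebra bilinear_map_mult[OF algebra linear_Pi1 linear_Pi2]])
  also have "\<dots> = (\<Sum>(u, v)\<leftarrow>Delta a1. \<Sum>(u', v')\<leftarrow>ps2. Pi1 (u * u') * Pi2 (v * v'))"
    by (intro arg_cong[where f = sum_list] map_cong refl, clarify)
      (rule tensor_eq_sum_list_bilinear[OF bilinear_map_Pi1_Pi2_comp ps2(2)]
        linear_mult_left[OF algebra])+
  also have "\<dots> = (\<Sum>(u, v)\<leftarrow>ps1. \<Sum>(u', v')\<leftarrow>ps2. Pi1 (u * u') * Pi2 (v * v'))"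
    by (rule tensor_eq_sum_list_bilinear[OF bilinear_map_sum_list[OF vector_space_scale] ps1(2)])
      (auto intro: bilinear_map_Pi1_Pi2_comp linear_mult_right[OF algebra])
  also have "\<dots> = (\<Sum>(u, v)\<leftarrow>ps1. \<Sum>(u', v')\<leftarrow>ps2. scale (eps v) (Pi1 u) * scale (eps u') (Pi2 v'))"
    using ps1(1) ps2(1)
    by (intro arg_cong[where f = sum_list] map_cong refl, clarify)+
      (force simp: Pi1_mult_right Pi2_mult_left algebra_over_scale_mult_commute[OF algebra])
  also have "\<dots> = (\<Sum>(u, v)\<leftarrow>ps1. scale (eps v) (Pi1 u)) * (\<Sum>(u', v')\<leftarrow>ps2. scale (eps u') (Pi2 v'))"
    by (subst sum_list_mult_const[symmetric]) (simp add: split_def flip: sum_list_const_mult)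
  also have "\<dots> = a1 * a2"
    using sum_counit_Pi1[OF ps1(2)] sum_counit_Pi2[OF ps2(2)] Pi1_A1[OF a1] Pi2_A2[OF a2] by simp
  finally show ?thesis .
qed

theorem sum_Delta_Pi: "(\<Sum>(u, v)\<leftarrow>Delta a. Pi1 u * Pi2 v) = a"
proof -
  obtain ps where ps: "set ps \<subseteq> A1 \<times> A2" and a: "a = (\<Sum>(x, y)\<leftarrow>ps. x * y)"
    using mult_spans by blast
  have "(\<Sum>(u, v)\<leftarrow>Delta a. Pi1 u * Pi2 v) = (\<Sum>(x, y)\<leftarrow>ps. \<Sum>(u, v)\<leftarrow>Delta (x * y). Pi1 u * Pi2 v)"
    using bialgebra_sum_Delta_sum_list[OF bialgebra bilinear_map_mult[OF algebra linear_Pi1 linear_Pi2],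
        of "\<lambda>(x, y). x * y" ps]
    by (simp add: a split_def)
  also have "\<dots> = a"
    using ps unfolding a
    by (intro arg_cong[where f = sum_list] map_cong refl, clarify) (auto intro: sum_Delta_Pi_mult)
  finally show ?thesis .
qed

end

theorem mainTheorem9:
  fixes scale :: "'k::field \<Rightarrow> 'a::ring_1 \<Rightarrow> 'a"
    and Delta :: "'a \<Rightarrow> ('a \<times> 'a) list" and eps :: "'a \<Rightarrow> 'k"
    and A1 A2 :: "'a set" and Pi1 Pi2 :: "'a \<Rightarrow> 'a"
  assumes bialg: "bialgebra scale Delta eps"
    and sub1: "subalgebra scale A1" and sub2: "subalgebra scale A2"
    and mu_surj: "\<forall>a. \<exists>ps. set ps \<subseteq> A1 \<times> A2 \<and> a = (\<Sum>(x, y)\<leftarrow>ps. x * y)"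
    and mu_inj: "\<forall>ps. set ps \<subseteq> A1 \<times> A2 \<longrightarrow> (\<Sum>(x, y)\<leftarrow>ps. x * y) = 0
                   \<longrightarrow> tensor_eq_on scale A1 A2 ps []"
    and Delta1: "\<forall>a\<in>A1. \<exists>ps. snd ` set ps \<subseteq> A1 \<and> tensor_eq scale (Delta a) ps"
    and Delta2: "\<forall>a\<in>A2. \<exists>ps. fst ` set ps \<subseteq> A2 \<and> tensor_eq scale (Delta a) ps"
    and Pi1_lin: "Vector_Spaces.linear scale scale Pi1"
    and Pi2_lin: "Vector_Spaces.linear scale scale Pi2"
    and Pi1_def: "\<forall>a1\<in>A1. \<forall>a2\<in>A2. Pi1 (a1 * a2) = scale (eps a2) a1"
    and Pi2_def: "\<forall>a1\<in>A1. \<forall>a2\<in>A2. Pi2 (a1 * a2) = scale (eps a1) a2"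
  shows "(\<Sum>(x, y)\<leftarrow>Delta a. Pi1 x * Pi2 y) = a"
proof -
  \<comment> \<open>\<open>mu_inj\<close> is what makes \<open>Pi1\<close>, \<open>Pi2\<close> well defined.\<close>
  interpret factorized_bialgebra scale Delta eps A1 A2 Pi1 Pi2
    by (rule factorized_bialgebra.intro) (use assms in auto)
  show ?thesis by (rule sum_Delta_Pi)
qed

end
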